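(* Let $\alpha\in C^\infty(\mathbb{R})$ satisfy $-1<\alpha<1$ and $\alpha(0)=0$, and set $\alpha^{(-1)}(t)=\int_0^t\alpha(s)\,ds$. Let $$p(x,\xi)=\sqrt{|\xi|^2+2\alpha(x_2)\xi_1\xi_3},\qquad x,\xi\in\mathbb{R}^3,$$ be the symbol of the cometric $\sum_{j,k} g^{jk}(x)d\xi_jd\xi_k=d\xi^2+2\alpha(x_2)\,d\xi_1d\xi_3$ on $T^*\mathbb{R}^3$, and let $\sum_{j,k} g_{jk}(x)dx_jdx_k$ be the corresponding Riemannian metric on $\mathbb{R}^3$, where $(g_{jk})=(g^{jk})^{-1}$. Then for each fixed $x_1\in\mathbb{R}$ and $-\pi/2<\theta<\pi/2$, the curve $$t\mapsto x(x_1,\theta;t)=\bigl(x_1+t\sin\theta,\ t\cos\theta,\ \sin\theta\,\alpha^{(-1)}(t\cos\theta)/\cos\theta\bigr)$$ is a geodesic for the metric $\sum g_{jk}dx_jdx_k$. Furthermore, the absolute value of the Jacobian determinant of the map $(x_1,\theta,t)\mapsto x(x_1,\theta;t)$ equals $|\alpha^{(-1)}(t)|$ when $\theta=0$. *)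

theory Defs
  imports "HOL-Analysis.Analysis"
begin

definition smooth_real :: "(real \<Rightarrow> real) \<Rightarrow> bool" where
  "smooth_real f \<longleftrightarrow> (\<exists>D :: nat \<Rightarrow> real \<Rightarrow> real. D 0 = f \<and>
      (\<forall>n x. (D n has_real_derivative D (Suc n) x) (at x)))"

definition antideriv :: "(real \<Rightarrow> real) \<Rightarrow> real \<Rightarrow> real" where
  "antideriv a t = (if 0 \<le> t then integral {0..t} a else - integral {t..0} a)"

definition cometric :: "(real \<Rightarrow> real) \<Rightarrow> real^3 \<Rightarrow> real^3^3" where
  "cometric a x = (\<chi> j k. (if j = k then 1 else 0)
      + (if (j = 1 \<and> k = 3) \<or> (j = 3 \<and> k = 1) then a (x$2) else 0))"

definition metric :: "(real \<Rightarrow> real) \<Rightarrow> real^3 \<Rightarrow> real^3^3" where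
  "metric a x = matrix_inv (cometric a x)"

definition pderiv3 :: "(real^3 \<Rightarrow> real) \<Rightarrow> 3 \<Rightarrow> real^3 \<Rightarrow> real" where
  "pderiv3 F l x = deriv (\<lambda>s. F (x + s *\<^sub>R axis l 1)) 0"

definition christoffel :: "(real^3 \<Rightarrow> real^3^3) \<Rightarrow> real^3 \<Rightarrow> 3 \<Rightarrow> 3 \<Rightarrow> 3 \<Rightarrow> real" where
  "christoffel G x k i j = (1/2) * (\<Sum>l\<in>UNIV. matrix_inv (G x) $ k $ l *
      (pderiv3 (\<lambda>y. G y $ j $ l) i x + pderiv3 (\<lambda>y. G y $ i $ l) j x
       - pderiv3 (\<lambda>y. G y $ i $ j) l x))"

definition is_geodesic :: "(real^3 \<Rightarrow> real^3^3) \<Rightarrow> (real \<Rightarrow> real^3) \<Rightarrow> bool" where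
  "is_geodesic G \<gamma> \<longleftrightarrow> (\<exists>\<gamma>' \<gamma>''. \<forall>t.
      (\<gamma> has_vector_derivative \<gamma>' t) (at t) \<and>
      (\<gamma>' has_vector_derivative \<gamma>'' t) (at t) \<and>
      (\<forall>k. \<gamma>'' t $ k + (\<Sum>i\<in>UNIV. \<Sum>j\<in>UNIV. christoffel G (\<gamma> t) k i j * \<gamma>' t $ i * \<gamma>' t $ j) = 0))"

definition curve :: "(real \<Rightarrow> real) \<Rightarrow> real \<Rightarrow> real \<Rightarrow> real \<Rightarrow> real^3" where
  "curve a x1 \<theta> t = vector [x1 + t * sin \<theta>, t * cos \<theta>,
      sin \<theta> * antideriv a (t * cos \<theta>) / cos \<theta>]"

definition param_map :: "(real \<Rightarrow> real) \<Rightarrow> real^3 \<Rightarrow> real^3" where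
  "param_map a u = curve a (u$1) (u$2) (u$3)"

end

theory Submission imports Defs begin

text \<open>The metric depends on \<open>x\<^sub>2\<close> only, so along the Hamiltonian flow of \<open>p\<^sup>2/2\<close> the
  momenta \<open>\<xi>\<^sub>1, \<xi>\<^sub>3\<close> are conserved; starting from \<open>\<xi> = (sin \<theta>, cos \<theta>, 0)\<close> also \<open>\<xi>\<^sub>2\<close> is
  conserved, since \<open>\<partial>p\<^sup>2/\<partial>x\<^sub>2 = 2\<alpha>'(x\<^sub>2)\<xi>\<^sub>1\<xi>\<^sub>3\<close> vanishes. Integrating
  \<open>x' = (g\<^sup>j\<^sup>k)\<xi> = (sin \<theta>, cos \<theta>, \<alpha>(x\<^sub>2) sin \<theta>)\<close> gives the curve. In the geodesic equation only
  \<open>\<partial>g/\<partial>x\<^sub>2\<close> enters the Christoffel symbols, and their contraction with the velocity,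
  \<open>(0, 0, -\<alpha>'(t cos \<theta>) sin \<theta> cos \<theta>)\<close>, cancels the acceleration. At \<open>\<theta> = 0\<close> the Jacobian
  matrix of \<open>(x\<^sub>1, \<theta>, t) \<mapsto> x\<close> is \<open>((1, t, 0), (0, 0, 1), (0, A(t), 0))\<close> with \<open>A = antideriv \<alpha>\<close>,
  of determinant \<open>-A(t)\<close>.\<close>

lemma vector3_eq_sum_axis:
  "(vector [a, b, c] :: real^3) = a *\<^sub>R axis 1 1 + b *\<^sub>R axis 2 1 + c *\<^sub>R axis 3 1"
  by (simp add: vec_eq_iff forall_3 axis_def)

lemma has_vector_derivative_vector3:
  assumes "(f1 has_real_derivative d1) (at t within S)" "(f2 has_real_derivative d2) (at t within S)"
    "(f3 has_real_derivative d3) (at t within S)"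
  shows "((\<lambda>t. vector [f1 t, f2 t, f3 t] :: real^3) has_vector_derivative vector [d1, d2, d3])
    (at t within S)"
  unfolding vector3_eq_sum_axis by (auto intro!: derivative_eq_intros assms)

lemma has_derivative_vector3:
  assumes "(f1 has_derivative d1) F" "(f2 has_derivative d2) F" "(f3 has_derivative d3) F"
  shows "((\<lambda>u. vector [f1 u, f2 u, f3 u] :: real^3) has_derivative (\<lambda>h. vector [d1 h, d2 h, d3 h])) F"
  unfolding vector3_eq_sum_axis by (auto intro!: derivative_eq_intros assms)

lemma antideriv_has_real_derivative:
  assumes "continuous_on UNIV a"
  shows "(antideriv a has_real_derivative a x) (at x)"
proof -
  define c where "c = min x 0 - 1"
  define d where "d = max x 0 + 1"
  have integrable: "a integrable_on {c..d}"
    using assms integrable_continuous_real continuous_on_subset by blast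
  have antideriv_eq: "antideriv a t = integral {c..t} a - integral {c..0} a" if "t \<in> {c<..<d}" for t
  proof (cases "0 \<le> t")
    case True
    have "integral {c..0} a + integral {0..t} a = integral {c..t} a"
      by (rule Henstock_Kurzweil_Integration.integral_combine)
        (use True that in \<open>auto simp: c_def d_def intro!: integrable_on_subinterval[OF integrable]\<close>)
    then show ?thesis using True by (simp add: antideriv_def)
  next
    case False
    have "integral {c..t} a + integral {t..0} a = integral {c..0} a"
      by (rule Henstock_Kurzweil_Integration.integral_combine)
        (use False that in \<open>auto simp: c_def d_def intro!: integrable_on_subinterval[OF integrable]\<close>)
    then show ?thesis using False by (simp add: antideriv_def)
  qed
  have "((\<lambda>t. integral {c..t} a) has_real_derivative a x) (at x within {c..d})"
    by (rule integral_has_real_derivative) (auto intro: continuous_on_subset[OF assms] simp: c_def d_def)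
  then have "((\<lambda>t. integral {c..t} a) has_real_derivative a x) (at x)"
    by (subst (asm) at_within_interior) (auto simp: c_def d_def)
  then have "((\<lambda>t. integral {c..t} a - integral {c..0} a) has_real_derivative a x) (at x)"
    by (auto intro!: derivative_eq_intros)
  then show ?thesis
    by (rule has_field_derivative_transform_within_open[where S = "{c<..<d}"])
      (use antideriv_eq in \<open>auto simp: c_def d_def\<close>)
qed

lemma matrix_inv_eqI:
  fixes A :: "'a::semiring_1^'n^'m" and B :: "'a^'m^'n"
  assumes "A ** B = mat 1" "B ** A = mat 1"
  shows "matrix_inv A = B"
proof -
  have "A ** matrix_inv A = mat 1 \<and> matrix_inv A ** A = mat 1"
    unfolding matrix_inv_def by (rule someI[of _ B]) (use assms in blast)
  then have left_inverse: "matrix_inv A ** A = mat 1" ..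
  have "matrix_inv A = matrix_inv A ** (A ** B)"
    using assms by simp
  also have "\<dots> = B"
    using left_inverse by (simp add: matrix_mul_assoc)
  finally show ?thesis .
qed

text \<open>For a metric \<open>g\<close> depending on the coordinate \<open>x\<^sub>m\<close> only, with \<open>C = g\<^sup>-\<^sup>1\<close> and
  \<open>P = \<partial>g/\<partial>x\<^sub>m\<close>, the left-hand side is the contraction \<open>\<Gamma>\<^sup>k\<^sub>i\<^sub>j v\<^sup>i v\<^sup>j\<close>.\<close>

lemma christoffel_contraction_one_coordinate:
  fixes C P :: "real^'n^'n" and v :: "real^'n"
  assumes "transpose P = P"
  shows "(\<Sum>i\<in>UNIV. \<Sum>j\<in>UNIV. (1/2 * (\<Sum>l\<in>UNIV. C $ k $ l *
      ((if i = m then P $ j $ l else 0) + (if j = m then P $ i $ l else 0) - (if l = m then P $ i $ j else 0))))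
      * v $ i * v $ j)
    = v $ m * (C *v (P *v v)) $ k - 1/2 * C $ k $ m * (v \<bullet> (P *v v))"
proof -
  define A where "A i j l = (if i = m then P $ j $ l else 0) + (if j = m then P $ i $ l else 0)
    - (if l = m then P $ i $ j else 0)" for i j l
  have sym: "P $ i $ j = P $ j $ i" for i j
    using assms by (metis transpose_def vec_lambda_beta)
  have if_zero_mult: "(if b then x else 0) * y = (if b then x * y else (0::real))"
      "y * (if b then x else 0) = (if b then y * x else (0::real))" for b x y
    by simp_all
  have first: "(\<Sum>i\<in>UNIV. \<Sum>j\<in>UNIV. (if i = m then P $ j $ l else 0) * v $ i * v $ j)
      = v $ m * (P *v v) $ l" for l
    by (subst sum.swap)
      (simp add: if_zero_mult, simp add: matrix_vector_mult_def sum_distrib_left sym[of _ l] mult_ac)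
  have second: "(\<Sum>i\<in>UNIV. \<Sum>j\<in>UNIV. (if j = m then P $ i $ l else 0) * v $ i * v $ j)
      = v $ m * (P *v v) $ l" for l
    by (simp add: if_zero_mult, simp add: matrix_vector_mult_def sum_distrib_left sym[of _ l] mult_ac)
  have third: "(\<Sum>i\<in>UNIV. \<Sum>j\<in>UNIV. (if l = m then P $ i $ j else 0) * v $ i * v $ j)
      = (if l = m then v \<bullet> (P *v v) else 0)" for l
    by (simp add: matrix_vector_mult_def inner_vec_def sum_distrib_left mult_ac)
  have contract: "(\<Sum>i\<in>UNIV. \<Sum>j\<in>UNIV. A i j l * v $ i * v $ j)
      = 2 * v $ m * (P *v v) $ l - (if l = m then v \<bullet> (P *v v) else 0)" for l
    unfolding A_def
    by (simp only: distrib_right left_diff_distrib sum.distrib sum_subtractf first second third)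
  have "(\<Sum>i\<in>UNIV. \<Sum>j\<in>UNIV. (1/2 * (\<Sum>l\<in>UNIV. C $ k $ l * A i j l)) * v $ i * v $ j)
      = (\<Sum>i\<in>UNIV. \<Sum>j\<in>UNIV. \<Sum>l\<in>UNIV. 1/2 * C $ k $ l * (A i j l * v $ i * v $ j))"
    by (simp add: sum_distrib_left sum_distrib_right mult_ac)
  also have "\<dots> = (\<Sum>i\<in>UNIV. \<Sum>l\<in>UNIV. \<Sum>j\<in>UNIV. 1/2 * C $ k $ l * (A i j l * v $ i * v $ j))"
    by (rule sum.cong[OF refl], rule sum.swap)
  also have "\<dots> = (\<Sum>l\<in>UNIV. 1/2 * C $ k $ l * (\<Sum>i\<in>UNIV. \<Sum>j\<in>UNIV. A i j l * v $ i * v $ j))"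
    by (subst sum.swap) (simp add: sum_distrib_left)
  also have "\<dots> = v $ m * (C *v (P *v v)) $ k - 1/2 * C $ k $ m * (v \<bullet> (P *v v))"
    by (simp only: contract) (simp add: right_diff_distrib sum_subtractf sum_distrib_left mult_ac
        matrix_vector_mult_def if_zero_mult)
  finally show ?thesis by (simp only: A_def)
qed

definition cometric_matrix :: "real \<Rightarrow> real^3^3" where
  "cometric_matrix b = (\<chi> j k. (if j = k then 1 else 0)
      + (if (j = 1 \<and> k = 3) \<or> (j = 3 \<and> k = 1) then b else 0))"

definition metric_matrix :: "real \<Rightarrow> real^3^3" where
  "metric_matrix b = (\<chi> j k. if j = k then (if j = 2 then 1 else 1 / (1 - b\<^sup>2))
      else if (j = 1 \<and> k = 3) \<or> (j = 3 \<and> k = 1) then - b / (1 - b\<^sup>2) else 0)"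

definition metric_matrix_deriv :: "real \<Rightarrow> real^3^3" where
  "metric_matrix_deriv b = (\<chi> j k. if j = k then (if j = 2 then 0 else 2 * b / (1 - b\<^sup>2)\<^sup>2)
      else if (j = 1 \<and> k = 3) \<or> (j = 3 \<and> k = 1) then - (1 + b\<^sup>2) / (1 - b\<^sup>2)\<^sup>2 else 0)"

lemma cometric_eq_cometric_matrix: "cometric a x = cometric_matrix (a (x$2))"
  by (simp add: cometric_def cometric_matrix_def)

lemma one_minus_square_nonzero:
  fixes b :: real
  assumes "\<bar>b\<bar> < 1"
  shows "1 - b\<^sup>2 \<noteq> 0"
  using assms abs_square_less_1[of b] by simp

lemma cometric_matrix_inverse:
  assumes "\<bar>b\<bar> < 1"
  shows "cometric_matrix b ** metric_matrix b = mat 1" "metric_matrix b ** cometric_matrix b = mat 1"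
proof -
  have "1 / (1 - b\<^sup>2) - b * b / (1 - b\<^sup>2) = 1"
    using one_minus_square_nonzero[OF assms] by (simp add: field_simps power2_eq_square)
  then show "cometric_matrix b ** metric_matrix b = mat 1" "metric_matrix b ** cometric_matrix b = mat 1"
    by (simp_all add: cometric_matrix_def metric_matrix_def matrix_matrix_mult_def vec_eq_iff
        forall_3 sum_3 mat_def)
qed

lemma metric_eq_metric_matrix:
  assumes "\<bar>a (x$2)\<bar> < 1"
  shows "metric a x = metric_matrix (a (x$2))"
  unfolding metric_def cometric_eq_cometric_matrix
  by (intro matrix_inv_eqI cometric_matrix_inverse assms)

lemma matrix_inv_metric:
  assumes "\<bar>a (x$2)\<bar> < 1"
  shows "matrix_inv (metric a x) = cometric_matrix (a (x$2))"
  unfolding metric_eq_metric_matrix[of a x, OF assms]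
  by (intro matrix_inv_eqI cometric_matrix_inverse assms)

lemma metric_matrix_has_real_derivative:
  assumes "\<bar>b\<bar> < 1"
  shows "((\<lambda>b. metric_matrix b $ j $ k) has_real_derivative metric_matrix_deriv b $ j $ k) (at b)"
proof -
  have "b\<^sup>2 \<noteq> 1"
    using one_minus_square_nonzero[OF assms] by simp
  have diagonal: "((\<lambda>b. 1 / (1 - b\<^sup>2)) has_real_derivative 2 * b / (1 - b\<^sup>2)\<^sup>2) (at b)"
    using \<open>b\<^sup>2 \<noteq> 1\<close> by (auto intro!: derivative_eq_intros simp: power2_eq_square)
  have "- ((1 - b\<^sup>2 + b * (2 * b)) / ((1 - b\<^sup>2) * (1 - b\<^sup>2))) = - (1 + b\<^sup>2) / (1 - b\<^sup>2)\<^sup>2"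
    by (simp add: power2_eq_square minus_divide_left[symmetric] diff_divide_distrib add_divide_distrib)
  then have off_diagonal: "((\<lambda>b. - b / (1 - b\<^sup>2)) has_real_derivative - (1 + b\<^sup>2) / (1 - b\<^sup>2)\<^sup>2) (at b)"
    using \<open>b\<^sup>2 \<noteq> 1\<close> by (auto intro!: derivative_eq_intros)
  have "(\<lambda>b. metric_matrix b $ j $ k) = (if j = k then (if j = 2 then (\<lambda>b. 1) else (\<lambda>b. 1 / (1 - b\<^sup>2)))
      else if (j = 1 \<and> k = 3) \<or> (j = 3 \<and> k = 1) then (\<lambda>b. - b / (1 - b\<^sup>2)) else (\<lambda>b. 0))"
    by (auto simp: metric_matrix_def fun_eq_iff)
  then show ?thesis
    using diagonal off_diagonal by (simp add: metric_matrix_deriv_def)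
qed

lemma transpose_metric_matrix_deriv: "transpose (metric_matrix_deriv b) = metric_matrix_deriv b"
  by (auto simp: vec_eq_iff forall_3 transpose_def metric_matrix_deriv_def)

lemma pderiv3_coordinate_function:
  assumes "(h has_real_derivative h') (at (x $ m))"
  shows "pderiv3 (\<lambda>y. h (y $ m)) i x = (if i = m then h' else 0)"
proof (cases "i = m")
  case True
  have "((\<lambda>s. h (s + x $ m)) has_real_derivative h') (at 0)"
    using assms DERIV_shift[of h h' 0 "x $ m"] by simp
  then show ?thesis
    unfolding pderiv3_def using True by (simp add: DERIV_imp_deriv add.commute)
next
  case False
  then show ?thesis
    unfolding pderiv3_def by (simp add: axis_def)
qed

lemma pderiv3_metric:
  assumes bound: "\<And>s. \<bar>a s\<bar> < 1" and deriv: "\<And>s. (a has_real_derivative a' s) (at s)"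
  shows "pderiv3 (\<lambda>y. metric a y $ j $ l) i x
    = (if i = 2 then (a' (x$2) *\<^sub>R metric_matrix_deriv (a (x$2))) $ j $ l else 0)"
proof -
  have "((\<lambda>s. metric_matrix (a s) $ j $ l) has_real_derivative
      metric_matrix_deriv (a (x$2)) $ j $ l * a' (x$2)) (at (x$2))"
    by (rule DERIV_chain2[OF metric_matrix_has_real_derivative[OF bound] deriv])
  then show ?thesis
    using pderiv3_coordinate_function[where h = "\<lambda>s. metric_matrix (a s) $ j $ l"]
    by (simp add: metric_eq_metric_matrix[of a, OF bound] mult.commute)
qed

lemma metric_matrix_deriv_velocity_contractions:
  fixes b s c :: real
  assumes "\<bar>b\<bar> < 1"
  defines "v \<equiv> vector [s, c, s * b] :: real^3"
  shows "cometric_matrix b *v (metric_matrix_deriv b *v v) = vector [0, 0, - s]"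
    and "v \<bullet> (metric_matrix_deriv b *v v) = 0"
proof -
  define q where "q = 1 - b\<^sup>2"
  have "q \<noteq> 0" "b\<^sup>2 = 1 - q"
    using one_minus_square_nonzero[OF assms(1)] by (simp_all add: q_def)
  then have derivative_times_velocity: "metric_matrix_deriv b *v v = vector [s * b / q, 0, - s / q]"
    unfolding v_def metric_matrix_deriv_def q_def[symmetric]
    by (simp add: vec_eq_iff forall_3 sum_3 matrix_vector_mult_def, intro conjI;
        simp add: field_simps power2_eq_square; algebra)
  have "b * (s * b / q) - s / q = - s"
    using \<open>q \<noteq> 0\<close> \<open>b\<^sup>2 = 1 - q\<close> by (simp add: field_simps power2_eq_square; algebra)
  then show "cometric_matrix b *v (metric_matrix_deriv b *v v) = vector [0, 0, - s]"
    unfolding derivative_times_velocity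
    by (simp add: vec_eq_iff forall_3 sum_3 matrix_vector_mult_def cometric_matrix_def)
  show "v \<bullet> (metric_matrix_deriv b *v v) = 0"
    unfolding derivative_times_velocity by (simp add: v_def inner_vec_def sum_3 algebra_simps)
qed

lemma curve_has_vector_derivative:
  assumes "continuous_on UNIV a" "cos \<theta> \<noteq> 0"
  shows "(curve a x1 \<theta> has_vector_derivative vector [sin \<theta>, cos \<theta>, sin \<theta> * a (t * cos \<theta>)]) (at t)"
  unfolding curve_def
proof (rule has_vector_derivative_vector3)
  have "((\<lambda>t. sin \<theta> * antideriv a (t * cos \<theta>) / cos \<theta>) has_real_derivative
      sin \<theta> * (a (t * cos \<theta>) * cos \<theta>) / cos \<theta>) (at t)"
    by (intro DERIV_cdivide DERIV_cmult DERIV_chain2[OF antideriv_has_real_derivative[OF assms(1)]])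
      (auto intro!: derivative_eq_intros)
  then show "((\<lambda>t. sin \<theta> * antideriv a (t * cos \<theta>) / cos \<theta>) has_real_derivative
      sin \<theta> * a (t * cos \<theta>)) (at t)"
    using assms(2) by simp
qed (auto intro!: derivative_eq_intros)

lemma is_geodesic_curve:
  assumes bound: "\<And>s. \<bar>a s\<bar> < 1" and deriv: "\<And>s. (a has_real_derivative a' s) (at s)"
    and "cos \<theta> \<noteq> 0"
  shows "is_geodesic (metric a) (curve a x1 \<theta>)"
  unfolding is_geodesic_def
proof (intro exI allI conjI)
  fix t
  let ?s = "sin \<theta>" and ?c = "cos \<theta>"
  define b where "b = a (t * ?c)"
  define v :: "real^3" where "v = vector [?s, ?c, ?s * b]"
  have "continuous_on UNIV a"
    using deriv by (meson DERIV_isCont continuous_at_imp_continuous_on)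
  then show "(curve a x1 \<theta> has_vector_derivative vector [?s, ?c, ?s * a (t * ?c)]) (at t)"
    using curve_has_vector_derivative \<open>?c \<noteq> 0\<close> by blast
  show "((\<lambda>t. vector [?s, ?c, ?s * a (t * ?c)] :: real^3) has_vector_derivative
      vector [0, 0, ?s * (a' (t * ?c) * ?c)]) (at t)"
    by (intro has_vector_derivative_vector3 DERIV_cmult DERIV_chain2[OF deriv])
      (auto intro!: derivative_eq_intros)
  fix k
  define P where "P = a' (t * ?c) *\<^sub>R metric_matrix_deriv b"
  have "curve a x1 \<theta> t $ 2 = t * ?c"
    by (simp add: curve_def)
  then have christoffel_sum:
    "(\<Sum>i\<in>UNIV. \<Sum>j\<in>UNIV. christoffel (metric a) (curve a x1 \<theta> t) k i j * v $ i * v $ j)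
      = v $ 2 * (cometric_matrix b *v (P *v v)) $ k - 1/2 * cometric_matrix b $ k $ 2 * (v \<bullet> (P *v v))"
    unfolding christoffel_def matrix_inv_metric[of a, OF bound] pderiv3_metric[OF bound deriv]
    by (simp only: b_def P_def)
      (intro christoffel_contraction_one_coordinate,
        simp add: transpose_scalar transpose_metric_matrix_deriv)
  have "\<bar>b\<bar> < 1"
    using bound by (simp add: b_def)
  then have "cometric_matrix b *v (P *v v) = a' (t * ?c) *\<^sub>R vector [0, 0, - ?s]"
    "v \<bullet> (P *v v) = 0"
    unfolding P_def v_def scaleR_matrix_vector_assoc[symmetric]
    by (simp_all add: matrix_vector_mult_scaleR metric_matrix_deriv_velocity_contractions)
  then show "vector [0, 0, ?s * (a' (t * ?c) * ?c)] $ k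
      + (\<Sum>i\<in>UNIV. \<Sum>j\<in>UNIV. christoffel (metric a) (curve a x1 \<theta> t) k i j
          * vector [?s, ?c, ?s * a (t * ?c)] $ i * vector [?s, ?c, ?s * a (t * ?c)] $ j) = 0"
    using christoffel_sum exhaust_3[of k] by (auto simp: v_def b_def)
qed

lemma param_map_has_derivative_at_theta_zero:
  assumes "continuous_on UNIV a"
  shows "(param_map a has_derivative (\<lambda>h. vector [h$1 + t * h$2, h$3, antideriv a t * h$2]))
    (at (vector [x1, 0, t]))"
proof -
  have "param_map a = (\<lambda>u. vector [u$1 + u$3 * sin (u$2), u$3 * cos (u$2),
      sin (u$2) * antideriv a (u$3 * cos (u$2)) / cos (u$2)])"
    by (simp add: fun_eq_iff param_map_def curve_def)
  then show ?thesis
    by (simp only:)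
      (rule has_derivative_vector3; rule has_derivative_eq_rhs;
        auto intro!: derivative_eq_intros bounded_linear_imp_has_derivative bounded_linear_vec_nth
          DERIV_compose_FDERIV[OF DERIV_sin] DERIV_compose_FDERIV[OF DERIV_cos]
          DERIV_compose_FDERIV[OF antideriv_has_real_derivative[OF assms]] simp: fun_eq_iff)
qed

lemma abs_det_jacobian_param_map_at_theta_zero:
  assumes "continuous_on UNIV a"
  shows "param_map a differentiable (at (vector [x1, 0, t]))
    \<and> \<bar>det (matrix (frechet_derivative (param_map a) (at (vector [x1, 0, t]))))\<bar> = \<bar>antideriv a t\<bar>"
proof
  note derivative = param_map_has_derivative_at_theta_zero[OF assms, of t x1]
  then show "param_map a differentiable (at (vector [x1, 0, t]))"
    unfolding differentiable_def by blast
  show "\<bar>det (matrix (frechet_derivative (param_map a) (at (vector [x1, 0, t]))))\<bar> = \<bar>antideriv a t\<bar>"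
    unfolding frechet_derivative_at[OF derivative, symmetric]
    by (simp add: det_3 matrix_def axis_def)
qed

theorem lemma2p1:
  fixes \<alpha> :: "real \<Rightarrow> real"
  assumes "smooth_real \<alpha>"
    and "\<And>s. -1 < \<alpha> s \<and> \<alpha> s < 1"
    and "\<alpha> 0 = 0"
  shows "(\<forall>x1 \<theta>. -(pi/2) < \<theta> \<and> \<theta> < pi/2 \<longrightarrow> is_geodesic (metric \<alpha>) (curve \<alpha> x1 \<theta>))
    \<and> (\<forall>x1 t. param_map \<alpha> differentiable (at (vector [x1, 0, t]))
        \<and> \<bar>det (matrix (frechet_derivative (param_map \<alpha>) (at (vector [x1, 0, t]))))\<bar>
            = \<bar>antideriv \<alpha> t\<bar>)"
proof -
  obtain D :: "nat \<Rightarrow> real \<Rightarrow> real" where "D 0 = \<alpha>"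
    and "\<And>n x. (D n has_real_derivative D (Suc n) x) (at x)"
    using assms(1) unfolding smooth_real_def by blast
  then have deriv: "\<And>s. (\<alpha> has_real_derivative D 1 s) (at s)"
    by (metis One_nat_def)
  then have "continuous_on UNIV \<alpha>"
    by (meson DERIV_isCont continuous_at_imp_continuous_on)
  moreover have "\<And>s. \<bar>\<alpha> s\<bar> < 1"
    using assms(2) by (simp add: abs_less_iff)
  ultimately have "is_geodesic (metric \<alpha>) (curve \<alpha> x1 \<theta>)" if "-(pi/2) < \<theta> \<and> \<theta> < pi/2" for x1 \<theta>
    using is_geodesic_curve[OF _ deriv] cos_gt_zero_pi[of \<theta>] that by force
  with \<open>continuous_on UNIV \<alpha>\<close> show ?thesis
    using abs_det_jacobian_param_map_at_theta_zero by blast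
qed

end
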